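(* Let $a\in\mathbb{R}^{n\times m}_+$ have no zero row and no zero column, $B\in\mathbb{R}^n_{>0}$, $\mathcal{P}=\{p\in\mathbb{R}^m_+:\sum_jp_j=\|B\|_1\}$, $\bar r_i=\|B\|_1\|a_i\|_\infty$, $\underline r_i=B_i\|a_i\|_\infty$. Define $\tilde h(r)=\sum_i\tilde h_i(r_i)$ where $\tilde h_i(r_i)=-B_i\log r_i$ for $r_i>\underline r_i$ and $\tilde h_i(r_i)=\frac{B_i}{2\underline r_i^2}(r_i-\underline r_i)^2-\frac{B_i}{\underline r_i}(r_i-\underline r_i)-B_i\log\underline r_i$ for $r_i\le\underline r_i$. Let $\mu=\min_i\frac{B_i}{\bar r_i^2}$, $L=\max_i\frac{B_i}{\underline r_i^2}$, $F(p)=\tilde h(ap)$, $F^*=\min_{p\in\mathcal{P}}F$. Then projected gradient $p^{t+1}=\Pi_{\mathcal{P}}(p^t-\frac{1}{L\|a\|^2}\nabla F(p^t))$ from $p^0\in\mathcal{P}$ satisfies $$F(p^t)-F^*\le\left(1-\frac{\mu}{\max\{\mu,\,LH_{\mathcal{P}}(a)^2\|a\|^2\}}\right)^t(F(p^0)-F^* )\quad\forall t\ge0.$$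
   Context: $a_i$ is the $i$-th row of $a$; $\|a\|$ is the spectral norm; $\Pi_{\mathcal{P}}$ Euclidean projection. Hoffman constant: $H_{\mathcal{X}}(A)$ is the smallest $H>0$ such that for every $z$ with $\mathcal{X}\cap\{x:Ax=z\}\neq\emptyset$, setting $\mathcal{S}=\{x:Ax=z\}$, $\|x-\Pi_{\mathcal{X}\cap\mathcal{S}}(x)\|\le H\|Ax-z\|$ for all $x\in\mathcal{X}$. *)

theory Defs
  imports "HOL-Analysis.Analysis"
begin

definition grad :: "('a::euclidean_space \<Rightarrow> real) \<Rightarrow> 'a \<Rightarrow> 'a" where
  "grad f x = (SOME g. (f has_derivative (\<lambda>v. g \<bullet> v)) (at x))"

definition spec_norm :: "real^'m^'n \<Rightarrow> real" where
  "spec_norm A = onorm (\<lambda>x. A *v x)"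

definition hoffman :: "(real^'m) set \<Rightarrow> real^'m^'n \<Rightarrow> real" where
  "hoffman X A = Inf {H. H > 0 \<and>
     (\<forall>z. X \<inter> {x. A *v x = z} \<noteq> {} \<longrightarrow>
        (\<forall>x\<in>X. norm (x - closest_point (X \<inter> {x. A *v x = z}) x) \<le> H * norm (A *v x - z)))}"

definition htilde_i :: "real \<Rightarrow> real \<Rightarrow> real \<Rightarrow> real" where
  "htilde_i Bi rl r = (if r > rl then - Bi * ln r
     else Bi / (2 * rl\<^sup>2) * (r - rl)\<^sup>2 - Bi / rl * (r - rl) - Bi * ln rl)"

end

theory Submission
  imports Defs
begin

(* On the simplex P every coordinate of a p stays below rbar_i, and there the derivative of
   htilde_i grows at least at rate B_i / rbar_i^2 and at most at rate B_i / rlow_i^2.  Hence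
   F = htilde o a is (L |a|^2)-smooth and satisfies the restricted strong convexity
   F y >= F x + <grad F x, y - x> + mu/2 |a (y - x)|^2 on P.  For a minimiser x* the Hoffman
   bound gives xb in P with a xb = a x* and |x - xb| <= H |a x - a x*|, and F xb = Fstar.
   Comparing the projected gradient step with the feasible point x + rho (xb - x),
   rho = mu / max mu (L H^2 |a|^2), gives F x' - Fstar <= (1 - rho) (F x - Fstar).  The Hoffman
   constant is finite because every d has a preimage e of a d that is sign-conformal to d
   and of norm at most C |a d|. *)

section \<open>The regularised logarithm\<close>

definition dhtilde_i :: "real \<Rightarrow> real \<Rightarrow> real \<Rightarrow> real" where
  "dhtilde_i Bi rl r = (if r > rl then - Bi / r else Bi / rl\<^sup>2 * (r - rl) - Bi / rl)"

lemma has_real_derivative_glue: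
  fixes f g :: "real \<Rightarrow> real"
  assumes f: "(f has_real_derivative D) (at x)" and g: "(g has_real_derivative D) (at x)"
    and "f x = g x"
  shows "((\<lambda>y. if y > x then f y else g y) has_real_derivative D) (at x)"
proof -
  let ?h = "\<lambda>y. if y > x then f y else g y"
  have "((\<lambda>y. (f y - f x) / (y - x)) \<longlongrightarrow> D) (at_right x)"
    using f by (simp add: has_field_derivative_iff filterlim_at_split)
  then have right: "((\<lambda>y. (?h y - ?h x) / (y - x)) \<longlongrightarrow> D) (at_right x)"
    by (rule Lim_transform_eventually)
      (use assms(3) in \<open>auto intro: eventually_mono[OF eventually_at_right_less]\<close>)
  have "((\<lambda>y. (g y - g x) / (y - x)) \<longlongrightarrow> D) (at_left x)"
    using g by (simp add: has_field_derivative_iff filterlim_at_split)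
  then have left: "((\<lambda>y. (?h y - ?h x) / (y - x)) \<longlongrightarrow> D) (at_left x)"
    by (rule Lim_transform_eventually)
      (auto intro: eventually_mono[OF eventually_at_left_real[of "x - 1"]])
  show ?thesis
    using filterlim_split_at_real[OF left right] by (simp add: has_field_derivative_iff)
qed

lemma has_real_derivative_htilde_i:
  assumes "rl > 0"
  shows "(htilde_i Bi rl has_real_derivative dhtilde_i Bi rl r) (at r)"
proof -
  let ?log = "\<lambda>y. - Bi * ln y"
  let ?quad = "\<lambda>y. Bi / (2 * rl\<^sup>2) * (y - rl)\<^sup>2 - Bi / rl * (y - rl) - Bi * ln rl"
  have log': "(?log has_real_derivative - Bi / r) (at r)" if "r > 0"
    using that by (auto intro!: derivative_eq_intros simp: field_simps)
  have quad': "(?quad has_real_derivative Bi / rl\<^sup>2 * (r - rl) - Bi / rl) (at r)"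
    using assms by (auto intro!: derivative_eq_intros simp: field_simps power2_eq_square)
  consider "r > rl" | "r < rl" | "r = rl" by linarith
  then show ?thesis
  proof cases
    case 1
    with assms have "r > 0" by simp
    from 1 have dh: "dhtilde_i Bi rl r = - Bi / r" by (simp add: dhtilde_i_def)
    show ?thesis unfolding dh
      by (rule has_field_derivative_transform_within_open[OF log'[OF \<open>r > 0\<close>], where S="{rl<..}"])
        (use 1 assms in \<open>auto simp: htilde_i_def dhtilde_i_def\<close>)
  next
    case 2
    then have dh: "dhtilde_i Bi rl r = Bi / rl\<^sup>2 * (r - rl) - Bi / rl"
      by (simp add: dhtilde_i_def)
    show ?thesis unfolding dh
      by (rule has_field_derivative_transform_within_open[OF quad', where S="{..<rl}"])
        (use 2 in \<open>auto simp: htilde_i_def dhtilde_i_def\<close>)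
  next
    case 3
    have "htilde_i Bi rl = (\<lambda>y. if y > r then ?log y else ?quad y)"
      using 3 by (auto simp: htilde_i_def fun_eq_iff)
    moreover have "(?quad has_real_derivative - Bi / r) (at r)"
      using quad' 3 by simp
    ultimately show ?thesis
      using has_real_derivative_glue[OF log'] 3 assms by (simp add: dhtilde_i_def)
  qed
qed

text \<open>Splitting at rl separates the linear regime of slope Bi / rl^2 from the
  reciprocal regime - Bi / r.\<close>

lemma dhtilde_i_min_max:
  assumes "rl > 0"
  shows "dhtilde_i Bi rl r = Bi / rl\<^sup>2 * (min r rl - rl) - Bi / max r rl"
  using assms by (auto simp: dhtilde_i_def min_def max_def)

lemma inverse_diff_bounds:
  fixes Bi l r t u :: real
  assumes "0 \<le> Bi" "0 < l" "l \<le> r" "r \<le> t" "t \<le> u"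
  shows "Bi / u\<^sup>2 * (t - r) \<le> Bi / r - Bi / t" and "Bi / r - Bi / t \<le> Bi / l\<^sup>2 * (t - r)"
proof -
  have eq: "Bi / r - Bi / t = Bi * (t - r) / (r * t)"
    using assms by (simp add: field_simps)
  have num: "0 \<le> Bi * (t - r)" using assms by simp
  have "l\<^sup>2 \<le> r * t" "r * t \<le> u\<^sup>2"
    using assms by (auto simp: power2_eq_square intro: mult_mono)
  moreover have "0 < r * t" using assms by simp
  ultimately have "Bi * (t - r) / u\<^sup>2 \<le> Bi * (t - r) / (r * t)"
    and "Bi * (t - r) / (r * t) \<le> Bi * (t - r) / l\<^sup>2"
    using num assms by (auto intro!: divide_left_mono)
  then show "Bi / u\<^sup>2 * (t - r) \<le> Bi / r - Bi / t" and "Bi / r - Bi / t \<le> Bi / l\<^sup>2 * (t - r)"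
    unfolding eq by simp_all
qed

lemma min_max_increments:
  fixes x y c :: real
  shows "(min y c - min x c) + (max y c - max x c) = y - x"
  by (simp add: min_def max_def)

lemma dhtilde_i_increment:
  assumes "0 < rl"
  shows "dhtilde_i Bi rl y - dhtilde_i Bi rl x
    = Bi / rl\<^sup>2 * (min y rl - min x rl) + (Bi / max x rl - Bi / max y rl)"
  by (simp add: dhtilde_i_min_max[OF assms] right_diff_distrib)

lemma dhtilde_i_increment_le:
  assumes "0 \<le> Bi" "0 < rl" "x \<le> y"
  shows "dhtilde_i Bi rl y - dhtilde_i Bi rl x \<le> Bi / rl\<^sup>2 * (y - x)"
proof -
  have "Bi / max x rl - Bi / max y rl \<le> Bi / rl\<^sup>2 * (max y rl - max x rl)"
    using inverse_diff_bounds(2)[of Bi rl "max x rl" "max y rl" "max y rl"] assms by auto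
  moreover have "Bi / rl\<^sup>2 * (min y rl - min x rl) + Bi / rl\<^sup>2 * (max y rl - max x rl)
      = Bi / rl\<^sup>2 * (y - x)"
    by (metis distrib_left min_max_increments)
  ultimately show ?thesis
    unfolding dhtilde_i_increment[OF assms(2)] by linarith
qed

lemma dhtilde_i_increment_ge:
  assumes "0 \<le> Bi" "0 < rl" "x \<le> y" "y \<le> R" "rl \<le> R"
  shows "Bi / R\<^sup>2 * (y - x) \<le> dhtilde_i Bi rl y - dhtilde_i Bi rl x"
proof -
  have "Bi / R\<^sup>2 * (max y rl - max x rl) \<le> Bi / max x rl - Bi / max y rl"
    using inverse_diff_bounds(1)[of Bi rl "max x rl" "max y rl" R] assms by auto
  moreover have "Bi / R\<^sup>2 * (min y rl - min x rl) \<le> Bi / rl\<^sup>2 * (min y rl - min x rl)"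
    using assms by (intro mult_right_mono divide_left_mono power_mono) auto
  moreover have "Bi / R\<^sup>2 * (min y rl - min x rl) + Bi / R\<^sup>2 * (max y rl - max x rl)
      = Bi / R\<^sup>2 * (y - x)"
    by (metis distrib_left min_max_increments)
  ultimately show ?thesis
    unfolding dhtilde_i_increment[OF assms(2)] by linarith
qed

lemma quadratic_lower_bound_real:
  fixes f f' :: "real \<Rightarrow> real"
  assumes deriv: "\<And>y. (f has_real_derivative f' y) (at y)"
    and mono: "\<And>x y. x \<le> y \<Longrightarrow> y \<le> R \<Longrightarrow> K * (y - x) \<le> f' y - f' x"
    and "r \<le> R" "s \<le> R"
  shows "f r + f' r * (s - r) + K / 2 * (s - r)\<^sup>2 \<le> f s"
proof -
  define g where "g y = f y - (f r + f' r * (y - r) + K / 2 * (y - r)\<^sup>2)" for y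
  have g': "(g has_real_derivative f' y - (f' r + K * (y - r))) (at y)" for y
    unfolding g_def by (rule derivative_eq_intros deriv refl | simp)+
  have "g r \<le> g s"
  proof (cases "r \<le> s")
    case True
    show ?thesis
    proof (rule DERIV_nonneg_imp_nondecreasing[OF True])
      fix y assume "r \<le> y" "y \<le> s"
      then show "\<exists>d. (g has_real_derivative d) (at y) \<and> 0 \<le> d"
        using g' mono[of r y] assms by fastforce
    qed
  next
    case False
    show ?thesis
    proof (rule DERIV_nonpos_imp_nonincreasing[of s r g])
      show "s \<le> r" using False by simp
      fix y assume "s \<le> y" "y \<le> r"
      then show "\<exists>d. (g has_real_derivative d) (at y) \<and> d \<le> 0"
        using g' mono[of y r] assms by (fastforce simp: algebra_simps)
    qed
  qed
  then show ?thesis by (simp add: g_def)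
qed

lemma quadratic_upper_bound_real:
  fixes f f' :: "real \<Rightarrow> real"
  assumes deriv: "\<And>y. (f has_real_derivative f' y) (at y)"
    and lip: "\<And>x y. x \<le> y \<Longrightarrow> f' y - f' x \<le> K * (y - x)"
  shows "f s \<le> f r + f' r * (s - r) + K / 2 * (s - r)\<^sup>2"
  using quadratic_lower_bound_real[of "\<lambda>y. - f y" "\<lambda>y. - f' y" "max r s" "- K" r s]
    deriv lip by (force intro: DERIV_minus)

lemma htilde_i_quadratic_upper:
  assumes "0 \<le> Bi" "0 < rl" "Bi / rl\<^sup>2 \<le> L"
  shows "htilde_i Bi rl s \<le> htilde_i Bi rl r + dhtilde_i Bi rl r * (s - r) + L / 2 * (s - r)\<^sup>2"
proof (rule quadratic_upper_bound_real)
  show "(htilde_i Bi rl has_real_derivative dhtilde_i Bi rl y) (at y)" for y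
    using assms(2) by (rule has_real_derivative_htilde_i)
  show "dhtilde_i Bi rl y - dhtilde_i Bi rl x \<le> L * (y - x)" if "x \<le> y" for x y
    using dhtilde_i_increment_le[OF assms(1,2) that] mult_right_mono[OF assms(3), of "y - x"] that
    by linarith
qed

lemma htilde_i_quadratic_lower:
  assumes "0 \<le> Bi" "0 < rl" "rl \<le> R" "r \<le> R" "s \<le> R" "mu \<le> Bi / R\<^sup>2"
  shows "htilde_i Bi rl r + dhtilde_i Bi rl r * (s - r) + mu / 2 * (s - r)\<^sup>2 \<le> htilde_i Bi rl s"
proof (rule quadratic_lower_bound_real)
  show "(htilde_i Bi rl has_real_derivative dhtilde_i Bi rl y) (at y)" for y
    using assms(2) by (rule has_real_derivative_htilde_i)
  show "mu * (y - x) \<le> dhtilde_i Bi rl y - dhtilde_i Bi rl x" if "x \<le> y" "y \<le> R" for x y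
    using dhtilde_i_increment_ge[OF assms(1,2) that assms(3)] mult_right_mono[OF assms(6), of "y - x"]
      that by linarith
qed (use assms in auto)

section \<open>Separable functions of a linear image\<close>

definition separable_comp :: "('n \<Rightarrow> real \<Rightarrow> real) \<Rightarrow> real^'m^'n \<Rightarrow> real^'m \<Rightarrow> real" where
  "separable_comp h a q = (\<Sum>i\<in>UNIV. h i ((a *v q) $ i))"

definition separable_comp_grad :: "('n \<Rightarrow> real \<Rightarrow> real) \<Rightarrow> real^'m^'n \<Rightarrow> real^'m \<Rightarrow> real^'m" where
  "separable_comp_grad h' a q = (\<chi> i. h' i ((a *v q) $ i)) v* a"

lemma inner_separable_comp_grad:
  "separable_comp_grad h' a q \<bullet> v = (\<Sum>i\<in>UNIV. h' i ((a *v q) $ i) * (a *v v) $ i)"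
  unfolding separable_comp_grad_def dot_lmul_matrix by (simp add: inner_vec_def)

lemma has_derivative_separable_comp:
  assumes "\<And>i r. (h i has_real_derivative h' i r) (at r)"
  shows "(separable_comp h a has_derivative (\<lambda>v. separable_comp_grad h' a q \<bullet> v)) (at q)"
proof -
  have "((\<lambda>q. (a *v q) $ i) has_derivative (\<lambda>v. (a *v v) $ i)) (at q)" for i
    by (intro bounded_linear_imp_has_derivative bounded_linear_compose[OF bounded_linear_vec_nth])
      (simp add: linear_linear)
  from has_derivative_compose[OF this assms[unfolded has_field_derivative_def]]
  have "((\<lambda>q. h i ((a *v q) $ i)) has_derivative (\<lambda>v. h' i ((a *v q) $ i) * (a *v v) $ i)) (at q)"
    for i .
  then show ?thesis
    unfolding separable_comp_def[abs_def] inner_separable_comp_grad by (rule has_derivative_sum)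
qed

lemma grad_eqI:
  fixes f :: "'a::euclidean_space \<Rightarrow> real"
  assumes "(f has_derivative (\<lambda>v. g \<bullet> v)) (at x)"
  shows "grad f x = g"
proof -
  have "\<exists>g. (f has_derivative (\<lambda>v. g \<bullet> v)) (at x)" using assms by blast
  then have "(f has_derivative (\<lambda>v. grad f x \<bullet> v)) (at x)"
    unfolding grad_def by (rule someI_ex)
  then have "(\<lambda>v. grad f x \<bullet> v) = (\<lambda>v. g \<bullet> v)"
    using assms by (rule has_derivative_unique)
  then have "grad f x \<bullet> (grad f x - g) = g \<bullet> (grad f x - g)" by metis
  then have "(grad f x - g) \<bullet> (grad f x - g) = 0" by (simp add: inner_diff_left)
  then show ?thesis by simp
qed

lemma norm_power2_vec: "(norm (w :: real^'n))\<^sup>2 = (\<Sum>i\<in>UNIV. (w $ i)\<^sup>2)"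
  unfolding power2_norm_eq_inner inner_vec_def by (simp add: power2_eq_square)

lemma separable_comp_quadratic_model:
  "separable_comp h a x + separable_comp_grad h' a x \<bullet> (y - x) + c / 2 * (norm (a *v (y - x)))\<^sup>2
   = (\<Sum>i\<in>UNIV. h i ((a *v x) $ i) + h' i ((a *v x) $ i) * ((a *v y) $ i - (a *v x) $ i)
        + c / 2 * ((a *v y) $ i - (a *v x) $ i)\<^sup>2)"
proof -
  have d: "(a *v (y - x)) $ i = (a *v y) $ i - (a *v x) $ i" for i
    by (simp add: matrix_vector_mult_diff_distrib)
  have "separable_comp h a x + separable_comp_grad h' a x \<bullet> (y - x)
      + c / 2 * (norm (a *v (y - x)))\<^sup>2
    = (\<Sum>i\<in>UNIV. h i ((a *v x) $ i))
      + (\<Sum>i\<in>UNIV. h' i ((a *v x) $ i) * ((a *v y) $ i - (a *v x) $ i))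
      + c / 2 * (\<Sum>i\<in>UNIV. ((a *v y) $ i - (a *v x) $ i)\<^sup>2)"
    unfolding separable_comp_def inner_separable_comp_grad norm_power2_vec d ..
  also have "\<dots> = (\<Sum>i\<in>UNIV. h i ((a *v x) $ i) + h' i ((a *v x) $ i) * ((a *v y) $ i - (a *v x) $ i)
        + c / 2 * ((a *v y) $ i - (a *v x) $ i)\<^sup>2)"
    by (simp only: sum.distrib sum_distrib_left)
  finally show ?thesis .
qed

lemma separable_comp_upper_bound:
  assumes "\<And>i r s. h i s \<le> h i r + h' i r * (s - r) + L / 2 * (s - r)\<^sup>2"
  shows "separable_comp h a y
    \<le> separable_comp h a x + separable_comp_grad h' a x \<bullet> (y - x) + L / 2 * (norm (a *v (y - x)))\<^sup>2"
  unfolding separable_comp_quadratic_model by (unfold separable_comp_def) (intro sum_mono assms)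

lemma separable_comp_lower_bound:
  assumes "\<And>i. h i ((a *v x) $ i) + h' i ((a *v x) $ i) * ((a *v y) $ i - (a *v x) $ i)
      + mu / 2 * ((a *v y) $ i - (a *v x) $ i)\<^sup>2 \<le> h i ((a *v y) $ i)"
  shows "separable_comp h a x + separable_comp_grad h' a x \<bullet> (y - x)
      + mu / 2 * (norm (a *v (y - x)))\<^sup>2 \<le> separable_comp h a y"
  unfolding separable_comp_quadratic_model by (unfold separable_comp_def) (intro sum_mono assms)

lemma matrix_vector_mult_le_row_max:
  fixes a :: "real^'m^'n" and q :: "real^'m"
  assumes "\<forall>j. 0 \<le> q $ j"
  shows "(a *v q) $ i \<le> (\<Sum>j\<in>UNIV. q $ j) * (MAX j. \<bar>a $ i $ j\<bar>)"
proof -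
  have "(a *v q) $ i = (\<Sum>j\<in>UNIV. a $ i $ j * q $ j)" by (simp add: matrix_vector_mult_def)
  also have "\<dots> \<le> (\<Sum>j\<in>UNIV. (MAX j. \<bar>a $ i $ j\<bar>) * q $ j)"
  proof (rule sum_mono)
    fix j
    have "a $ i $ j \<le> (MAX j. \<bar>a $ i $ j\<bar>)" by (rule order_trans[OF abs_ge_self Max_ge]) auto
    then show "a $ i $ j * q $ j \<le> (MAX j. \<bar>a $ i $ j\<bar>) * q $ j"
      using assms by (intro mult_right_mono) auto
  qed
  finally show ?thesis by (simp add: sum_distrib_right mult.commute)
qed

lemma row_max_pos:
  fixes a :: "real^'m^'n"
  assumes "a $ i $ j \<noteq> 0"
  shows "0 < (MAX j. \<bar>a $ i $ j\<bar>)"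
proof -
  have "\<bar>a $ i $ j\<bar> \<le> (MAX j. \<bar>a $ i $ j\<bar>)" by (rule Max_ge) auto
  with assms show ?thesis by linarith
qed

lemma norm_matrix_vector_le_spec_norm: "norm (a *v v) \<le> spec_norm a * norm v"
  unfolding spec_norm_def by (rule onorm) (simp add: linear_linear)

lemma spec_norm_pos:
  fixes a :: "real^'m^'n"
  assumes "a $ i $ j \<noteq> 0"
  shows "0 < spec_norm a"
proof -
  have "(a *v axis j 1) $ i = a $ i $ j"
    by (simp add: matrix_vector_mult_def axis_def if_distrib cong: if_cong)
  then have "\<exists>x. a *v x \<noteq> 0" using assms by (metis zero_index)
  then show ?thesis unfolding spec_norm_def by (simp add: onorm_pos_lt linear_linear)
qed

lemma htilde_thresholds:
  fixes a :: "real^'m^'n" and B :: "real^'n"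
  assumes "\<forall>i. \<exists>j. a $ i $ j \<noteq> 0" "\<forall>i. 0 < B $ i"
  defines "rl \<equiv> \<chi> i. B $ i * (MAX j. \<bar>a $ i $ j\<bar>)"
    and "R \<equiv> \<chi> i. (\<Sum>k\<in>UNIV. \<bar>B $ k\<bar>) * (MAX j. \<bar>a $ i $ j\<bar>)"
  shows "0 < rl $ i" and "rl $ i \<le> R $ i" and "0 < B $ i / (R $ i)\<^sup>2"
    and "\<forall>j. 0 \<le> q $ j \<Longrightarrow> (\<Sum>j\<in>UNIV. q $ j) = (\<Sum>k\<in>UNIV. \<bar>B $ k\<bar>) \<Longrightarrow> (a *v q) $ i \<le> R $ i"
proof -
  have "0 < (MAX j. \<bar>a $ i $ j\<bar>)" using assms(1) row_max_pos by blast
  moreover have "B $ i \<le> (\<Sum>k\<in>UNIV. \<bar>B $ k\<bar>)"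
    using member_le_sum[of i UNIV "\<lambda>k. \<bar>B $ k\<bar>"] by simp
  ultimately show "0 < rl $ i" and "rl $ i \<le> R $ i"
    using assms(2) by (simp_all add: rl_def R_def mult_right_mono)
  then show "0 < B $ i / (R $ i)\<^sup>2" using assms(2) by (intro divide_pos_pos) auto
  show "(a *v q) $ i \<le> R $ i" if "\<forall>j. 0 \<le> q $ j" "(\<Sum>j\<in>UNIV. q $ j) = (\<Sum>k\<in>UNIV. \<bar>B $ k\<bar>)"
    using matrix_vector_mult_le_row_max[OF that(1), of a i] that(2) by (simp add: R_def)
qed

lemma has_derivative_htilde_objective:
  assumes "\<forall>i. 0 < rl $ i"
  shows "(separable_comp (\<lambda>i. htilde_i (B $ i) (rl $ i)) a has_derivative
      (\<lambda>v. separable_comp_grad (\<lambda>i. dhtilde_i (B $ i) (rl $ i)) a x \<bullet> v)) (at x)"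
  using assms by (intro has_derivative_separable_comp has_real_derivative_htilde_i) auto

lemma htilde_objective_upper_bound:
  fixes a :: "real^'m^'n"
  assumes "\<forall>i. 0 \<le> B $ i" "\<forall>i. 0 < rl $ i" "\<forall>i. B $ i / (rl $ i)\<^sup>2 \<le> L"
  defines "F \<equiv> separable_comp (\<lambda>i. htilde_i (B $ i) (rl $ i)) a"
  shows "F y \<le> F x + grad F x \<bullet> (y - x) + L * (spec_norm a)\<^sup>2 / 2 * (norm (y - x))\<^sup>2"
proof -
  have "0 \<le> L" using assms(1,3) by (metis divide_nonneg_nonneg order_trans zero_le_power2)
  have image: "(norm (a *v (y - x)))\<^sup>2 \<le> (spec_norm a)\<^sup>2 * (norm (y - x))\<^sup>2"
    using norm_matrix_vector_le_spec_norm[of a "y - x"]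
    by (metis norm_ge_zero power_mono power_mult_distrib)
  have "F y \<le> F x + grad F x \<bullet> (y - x) + L / 2 * (norm (a *v (y - x)))\<^sup>2"
    unfolding F_def grad_eqI[OF has_derivative_htilde_objective[OF assms(2)]]
    using assms(1-3) by (intro separable_comp_upper_bound htilde_i_quadratic_upper) auto
  also have "\<dots> \<le> F x + grad F x \<bullet> (y - x) + L / 2 * ((spec_norm a)\<^sup>2 * (norm (y - x))\<^sup>2)"
    using image \<open>0 \<le> L\<close> by (intro add_left_mono mult_left_mono) simp_all
  finally show ?thesis by (simp add: mult_ac)
qed

lemma htilde_objective_lower_bound:
  fixes a :: "real^'m^'n"
  assumes "\<forall>i. 0 \<le> B $ i" "\<forall>i. 0 < rl $ i" "\<forall>i. rl $ i \<le> R $ i" "\<forall>i. mu \<le> B $ i / (R $ i)\<^sup>2"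
    and "\<forall>i. (a *v x) $ i \<le> R $ i" "\<forall>i. (a *v y) $ i \<le> R $ i"
  defines "F \<equiv> separable_comp (\<lambda>i. htilde_i (B $ i) (rl $ i)) a"
  shows "F x + grad F x \<bullet> (y - x) + mu / 2 * (norm (a *v (y - x)))\<^sup>2 \<le> F y"
  unfolding F_def grad_eqI[OF has_derivative_htilde_objective[OF assms(2)]]
  using assms(1,2,4-6)
  by (intro separable_comp_lower_bound htilde_i_quadratic_lower[OF _ _ assms(3)[rule_format]]) auto

section \<open>Projected gradient descent\<close>

lemma power2_norm_add_scaleR:
  fixes w g :: "'a::real_inner"
  shows "(norm (w + c *\<^sub>R g))\<^sup>2 = (norm w)\<^sup>2 + 2 * c * (g \<bullet> w) + c\<^sup>2 * (norm g)\<^sup>2"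
  unfolding power2_norm_eq_inner
  by (simp add: inner_add_left inner_add_right inner_commute algebra_simps power2_eq_square)

lemma closest_point_gradient_step_le:
  fixes P :: "'a::euclidean_space set" and x G :: 'a
  assumes "closed P" "y \<in> P" "0 < Lf"
  defines "x' \<equiv> closest_point P (x - (1 / Lf) *\<^sub>R G)"
  shows "G \<bullet> (x' - x) + Lf / 2 * (norm (x' - x))\<^sup>2 \<le> G \<bullet> (y - x) + Lf / 2 * (norm (y - x))\<^sup>2"
proof -
  let ?c = "1 / Lf"
  have "dist (x - ?c *\<^sub>R G) x' \<le> dist (x - ?c *\<^sub>R G) y"
    unfolding x'_def using assms(1,2) by (rule closest_point_le)
  then have "norm ((x' - x) + ?c *\<^sub>R G) \<le> norm ((y - x) + ?c *\<^sub>R G)"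
    by (simp add: dist_norm norm_minus_commute algebra_simps)
  then have "(norm ((x' - x) + ?c *\<^sub>R G))\<^sup>2 \<le> (norm ((y - x) + ?c *\<^sub>R G))\<^sup>2"
    by (simp add: power_mono)
  then have "Lf / 2 * ((norm (x' - x))\<^sup>2 + 2 * ?c * (G \<bullet> (x' - x)))
      \<le> Lf / 2 * ((norm (y - x))\<^sup>2 + 2 * ?c * (G \<bullet> (y - x)))"
    unfolding power2_norm_add_scaleR using assms(3) by (intro mult_left_mono) auto
  then show ?thesis
    using assms(3) by (simp add: algebra_simps)
qed

text \<open>The projected step is at least as good as the feasible point
  (1 - rho) x + rho xb on the quadratic model.\<close>

lemma projected_gradient_step_contraction:
  fixes F :: "'a::euclidean_space \<Rightarrow> real"
  assumes P: "closed P" "convex P" "x \<in> P" "xb \<in> P"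
    and upper: "\<And>y. y \<in> P \<Longrightarrow> F y \<le> F x + G \<bullet> (y - x) + Lf / 2 * (norm (y - x))\<^sup>2"
    and lower: "F x + G \<bullet> (xb - x) + mu / 2 * d\<^sup>2 \<le> F xb"
    and dist: "norm (xb - x) \<le> H * d"
    and Lf: "0 < Lf" and rho: "0 \<le> rho" "rho \<le> 1" "rho * (Lf * H\<^sup>2) \<le> mu"
  shows "F (closest_point P (x - (1 / Lf) *\<^sub>R G)) - F xb \<le> (1 - rho) * (F x - F xb)"
proof -
  define x' where "x' = closest_point P (x - (1 / Lf) *\<^sub>R G)"
  define y where "y = (1 - rho) *\<^sub>R x + rho *\<^sub>R xb"
  have "x' \<in> P" unfolding x'_def using P by (intro closest_point_in_set) auto
  have "y \<in> P" unfolding y_def using P rho by (intro convexD_alt)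
  have y_x: "y - x = rho *\<^sub>R (xb - x)" unfolding y_def by (simp add: algebra_simps)
  have "(norm (xb - x))\<^sup>2 \<le> H\<^sup>2 * d\<^sup>2"
    using dist by (metis norm_ge_zero power_mono power_mult_distrib)
  then have "rho\<^sup>2 * (Lf / 2 * (norm (xb - x))\<^sup>2) \<le> rho\<^sup>2 * (Lf / 2 * (H\<^sup>2 * d\<^sup>2))"
    using Lf by (intro mult_left_mono) auto
  also have "\<dots> = rho * d\<^sup>2 / 2 * (rho * (Lf * H\<^sup>2))"
    by (simp add: power2_eq_square algebra_simps)
  also have "\<dots> \<le> rho * d\<^sup>2 / 2 * mu"
    using rho by (intro mult_left_mono) auto
  finally have quadratic: "rho\<^sup>2 * (Lf / 2 * (norm (xb - x))\<^sup>2) \<le> rho * (mu / 2 * d\<^sup>2)"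
    by (simp add: algebra_simps)
  have "F x' \<le> F x + G \<bullet> (x' - x) + Lf / 2 * (norm (x' - x))\<^sup>2"
    using upper \<open>x' \<in> P\<close> by blast
  also have "\<dots> \<le> F x + G \<bullet> (y - x) + Lf / 2 * (norm (y - x))\<^sup>2"
    using closest_point_gradient_step_le[OF P(1) \<open>y \<in> P\<close> Lf] unfolding x'_def by simp
  also have "\<dots> = F x + rho * (G \<bullet> (xb - x)) + rho\<^sup>2 * (Lf / 2 * (norm (xb - x))\<^sup>2)"
    unfolding y_x using rho by (simp add: power_mult_distrib)
  also have "\<dots> \<le> F x + rho * (F xb - F x - mu / 2 * d\<^sup>2) + rho * (mu / 2 * d\<^sup>2)"
    using lower quadratic rho by (intro add_mono mult_left_mono) auto
  finally show ?thesis unfolding x'_def by (simp add: algebra_simps)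
qed

lemma geometric_decay:
  fixes u :: "nat \<Rightarrow> real"
  assumes "\<And>t. u (Suc t) \<le> q * u t" "0 \<le> q"
  shows "u t \<le> q ^ t * u 0"
proof (induction t)
  case (Suc t)
  have "u (Suc t) \<le> q * u t" by (rule assms(1))
  also have "\<dots> \<le> q * (q ^ t * u 0)" using Suc assms(2) by (rule mult_left_mono)
  finally show ?case by simp
qed simp

lemma closed_matrix_fibre: "closed {x :: real^'m. (a :: real^'m^'n) *v x = z}"
  by (intro closed_Collect_eq continuous_intros)

lemma projected_gradient_linear_convergence:
  fixes F :: "real^'m \<Rightarrow> real" and G :: "real^'m \<Rightarrow> real^'m" and a :: "real^'m^'n"
  assumes P: "closed P" "convex P" "xs \<in> P"
    and fibre: "\<And>x y. a *v x = a *v y \<Longrightarrow> F x = F y"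
    and upper: "\<And>x y. x \<in> P \<Longrightarrow> y \<in> P
      \<Longrightarrow> F y \<le> F x + G x \<bullet> (y - x) + Lf / 2 * (norm (y - x))\<^sup>2"
    and lower: "\<And>x y. x \<in> P \<Longrightarrow> y \<in> P
      \<Longrightarrow> F x + G x \<bullet> (y - x) + mu / 2 * (norm (a *v (y - x)))\<^sup>2 \<le> F y"
    and hoffman: "\<And>x. x \<in> P
      \<Longrightarrow> norm (x - closest_point (P \<inter> {y. a *v y = a *v xs}) x) \<le> H * norm (a *v x - a *v xs)"
    and Lf: "0 < Lf" and mu: "0 < mu"
    and p0: "p 0 \<in> P" and step: "\<And>t. p (Suc t) = closest_point P (p t - (1 / Lf) *\<^sub>R G (p t))"
  shows "F (p t) - F xs \<le> (1 - mu / max mu (Lf * H\<^sup>2)) ^ t * (F (p 0) - F xs)"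
proof -
  define rho where "rho = mu / max mu (Lf * H\<^sup>2)"
  have rho: "0 \<le> rho" "rho \<le> 1" "rho * (Lf * H\<^sup>2) \<le> mu"
    using mu by (auto simp: rho_def field_simps)
  define X where "X = P \<inter> {y. a *v y = a *v xs}"
  have "closed X" unfolding X_def using P(1) by (intro closed_Int closed_matrix_fibre)
  have "X \<noteq> {}" unfolding X_def using P(3) by blast
  have p_in: "p t \<in> P" for t
    by (induction t) (use p0 step P in \<open>auto intro: closest_point_in_set\<close>)
  have "F (p (Suc t)) - F xs \<le> (1 - rho) * (F (p t) - F xs)" for t
  proof -
    define xb where "xb = closest_point X (p t)"
    have "xb \<in> X" unfolding xb_def using \<open>closed X\<close> \<open>X \<noteq> {}\<close> by (rule closest_point_in_set)
    then have "xb \<in> P" and "a *v xb = a *v xs" by (simp_all add: X_def)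
    then have "F xb = F xs" by (intro fibre)
    have "norm (a *v (xb - p t)) = norm (a *v p t - a *v xs)"
      using \<open>a *v xb = a *v xs\<close> by (simp add: matrix_vector_mult_diff_distrib norm_minus_commute)
    then have lower_t:
      "F (p t) + G (p t) \<bullet> (xb - p t) + mu / 2 * (norm (a *v p t - a *v xs))\<^sup>2 \<le> F xb"
      using lower[OF p_in[of t] \<open>xb \<in> P\<close>] by simp
    have dist_t: "norm (xb - p t) \<le> H * norm (a *v p t - a *v xs)"
      using hoffman[OF p_in] by (simp add: xb_def X_def norm_minus_commute)
    have "F (p (Suc t)) - F xb \<le> (1 - rho) * (F (p t) - F xb)"
      unfolding step
      using projected_gradient_step_contraction[OF P(1,2) p_in[of t] \<open>xb \<in> P\<close>
          upper[OF p_in[of t]] lower_t dist_t Lf rho] .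
    then show ?thesis using \<open>F xb = F xs\<close> by simp
  qed
  then show ?thesis
    unfolding rho_def[symmetric] by (rule geometric_decay) (use rho in simp)
qed

section \<open>Hoffman constants of nonnegative slices\<close>

definition conformal :: "real^'m \<Rightarrow> real^'m \<Rightarrow> bool" where
  "conformal e d \<longleftrightarrow> (\<forall>j. 0 \<le> e $ j * d $ j \<and> \<bar>e $ j\<bar> \<le> \<bar>d $ j\<bar>)"

definition sign_cone :: "real^'m \<Rightarrow> (real^'m) set" where
  "sign_cone e = {v. \<forall>j. (e $ j = 0 \<longrightarrow> v $ j = 0) \<and> 0 \<le> v $ j * e $ j}"

lemma conformal_coord:
  fixes e' e d :: real
  assumes "0 \<le> e' * e" "\<bar>e'\<bar> \<le> \<bar>e\<bar>" "0 \<le> e * d" "\<bar>e\<bar> \<le> \<bar>d\<bar>"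
  shows "0 \<le> e' * d \<and> \<bar>e'\<bar> \<le> \<bar>d\<bar>"
  using assms by (auto simp: abs_if zero_le_mult_iff split: if_splits)

lemma conformal_trans: "conformal e' e \<Longrightarrow> conformal e d \<Longrightarrow> conformal e' d"
  unfolding conformal_def using conformal_coord by blast

lemma sign_cone_scaleR: "v \<in> sign_cone e \<Longrightarrow> 0 \<le> c \<Longrightarrow> c *\<^sub>R v \<in> sign_cone e"
  by (simp add: sign_cone_def mult.assoc)

lemma sign_cone_sgn: "sign_cone (\<chi> j. sgn (e $ j)) = sign_cone e"
proof -
  have "0 \<le> v * sgn c \<longleftrightarrow> 0 \<le> v * c" for v c :: real
    by (cases c rule: linorder_cases) (auto simp: zero_le_mult_iff)
  then show ?thesis unfolding sign_cone_def by (simp add: sgn_zero_iff)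
qed

lemma closed_sign_cone: "closed (sign_cone e)"
  unfolding sign_cone_def
  by (intro closed_Collect_all closed_Collect_conj closed_Collect_imp closed_Collect_le
      closed_Collect_eq continuous_intros) auto

lemma finite_vec_range: "finite A \<Longrightarrow> finite {x :: 'a^'n. \<forall>j. x $ j \<in> A}"
proof -
  assume "finite A"
  have "{x :: 'a^'n. \<forall>j. x $ j \<in> A} \<subseteq> vec_lambda ` (UNIV \<rightarrow>\<^sub>E A)"
    by (auto intro!: image_eqI[where x = "vec_nth _"])
  moreover have "finite (vec_lambda ` ((UNIV :: 'n set) \<rightarrow>\<^sub>E A))"
    using \<open>finite A\<close> by (intro finite_imageI finite_PiE) auto
  ultimately show ?thesis by (rule finite_subset)
qed

lemma sign_cone_shrink:
  assumes "v \<in> sign_cone e" "v \<noteq> 0"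
  obtains t where "0 < t" "conformal (e - t *\<^sub>R v) e"
    "(\<Sum>j\<in>UNIV. \<bar>(e - t *\<^sub>R v) $ j\<bar>) = (\<Sum>j\<in>UNIV. \<bar>e $ j\<bar>) - t * (\<Sum>j\<in>UNIV. \<bar>v $ j\<bar>)"
proof -
  have v: "e $ j = 0 \<longrightarrow> v $ j = 0" "0 \<le> v $ j * e $ j" for j
    using assms(1) by (auto simp: sign_cone_def)
  define T where "T = {\<bar>e $ j\<bar> / \<bar>v $ j\<bar> | j. v $ j \<noteq> 0}"
  define t where "t = Min T"
  have "finite T" unfolding T_def by simp
  moreover have "T \<noteq> {}" unfolding T_def using assms(2) by (auto simp: vec_eq_iff)
  moreover have "\<forall>x\<in>T. 0 < x" unfolding T_def using v(1) by force
  ultimately have "0 < t" unfolding t_def by simp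
  have le: "t * \<bar>v $ j\<bar> \<le> \<bar>e $ j\<bar>" for j
  proof (cases "v $ j = 0")
    case False
    then have "t \<le> \<bar>e $ j\<bar> / \<bar>v $ j\<bar>"
      unfolding t_def T_def by (intro Min_le) auto
    with False show ?thesis by (simp add: field_simps)
  qed simp
  have coord: "\<bar>e $ j - t * v $ j\<bar> = \<bar>e $ j\<bar> - t * \<bar>v $ j\<bar> \<and> 0 \<le> (e $ j - t * v $ j) * e $ j" for j
    using v[of j] le[of j] \<open>0 < t\<close>
    by (auto simp: abs_if mult_le_0_iff zero_le_mult_iff split: if_splits)
  show ?thesis
  proof
    show "0 < t" by fact
    show "conformal (e - t *\<^sub>R v) e"
      unfolding conformal_def using coord \<open>0 < t\<close> by (simp add: mult_nonneg_nonneg)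
    show "(\<Sum>j\<in>UNIV. \<bar>(e - t *\<^sub>R v) $ j\<bar>) = (\<Sum>j\<in>UNIV. \<bar>e $ j\<bar>) - t * (\<Sum>j\<in>UNIV. \<bar>v $ j\<bar>)"
      using coord by (simp add: sum_subtractf sum_distrib_left)
  qed
qed

lemma compact_conformal_fibre:
  fixes f :: "real^'m \<Rightarrow> 'b::real_normed_vector"
  assumes "linear f"
  shows "compact {e. f e = f d \<and> conformal e d}"
proof -
  have "continuous_on UNIV f"
    using assms by (simp add: linear_continuous_on linear_conv_bounded_linear)
  then have "closed {e. f e = f d}"
    by (intro closed_Collect_eq continuous_on_const) auto
  moreover have "closed {e. conformal e d}"
    unfolding conformal_def
    by (intro closed_Collect_all closed_Collect_conj closed_Collect_le continuous_intros)
  moreover have "norm e \<le> (\<Sum>j\<in>UNIV. \<bar>d $ j\<bar>)" if "conformal e d" for e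
  proof -
    have "norm e \<le> (\<Sum>j\<in>UNIV. \<bar>e $ j\<bar>)" by (rule norm_le_l1_cart)
    also have "\<dots> \<le> (\<Sum>j\<in>UNIV. \<bar>d $ j\<bar>)"
      using that by (intro sum_mono) (simp add: conformal_def)
    finally show ?thesis .
  qed
  then have "bounded {e. conformal e d}" unfolding bounded_iff by blast
  ultimately show ?thesis
    unfolding Collect_conj_eq by (intro closed_Int_compact) (auto simp: compact_eq_bounded_closed)
qed

text \<open>Take an l1-minimal conformal solution: a kernel direction inside its sign cone
  could be subtracted and would lower the l1 norm.\<close>

lemma exists_conformal_kernel_free:
  fixes f :: "real^'m \<Rightarrow> 'b::real_normed_vector"
  assumes "linear f"
  obtains e where "f e = f d" "conformal e d" "\<And>v. v \<in> sign_cone e \<Longrightarrow> f v = 0 \<Longrightarrow> v = 0"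
proof -
  define \<Lambda> where "\<Lambda> = {e. f e = f d \<and> conformal e d}"
  have "compact \<Lambda>" unfolding \<Lambda>_def using assms by (rule compact_conformal_fibre)
  moreover have "\<Lambda> \<noteq> {}" by (auto simp: \<Lambda>_def conformal_def)
  moreover have "continuous_on \<Lambda> (\<lambda>e. \<Sum>j\<in>UNIV. \<bar>e $ j\<bar>)" by (intro continuous_intros)
  ultimately obtain e where "e \<in> \<Lambda>"
    and e_min: "\<And>e'. e' \<in> \<Lambda> \<Longrightarrow> (\<Sum>j\<in>UNIV. \<bar>e $ j\<bar>) \<le> (\<Sum>j\<in>UNIV. \<bar>e' $ j\<bar>)"
    by (metis continuous_attains_inf)
  have "v = 0" if "v \<in> sign_cone e" "f v = 0" for v
  proof (rule ccontr)
    assume "v \<noteq> 0"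
    with \<open>v \<in> sign_cone e\<close> obtain t where "0 < t" "conformal (e - t *\<^sub>R v) e"
      and l1: "(\<Sum>j\<in>UNIV. \<bar>(e - t *\<^sub>R v) $ j\<bar>) = (\<Sum>j\<in>UNIV. \<bar>e $ j\<bar>) - t * (\<Sum>j\<in>UNIV. \<bar>v $ j\<bar>)"
      by (rule sign_cone_shrink)
    have "e - t *\<^sub>R v \<in> \<Lambda>"
      using \<open>e \<in> \<Lambda>\<close> \<open>f v = 0\<close> conformal_trans[OF \<open>conformal (e - t *\<^sub>R v) e\<close>]
      by (simp add: \<Lambda>_def linear_diff[OF assms] linear_scale[OF assms])
    then have "t * (\<Sum>j\<in>UNIV. \<bar>v $ j\<bar>) \<le> 0" using e_min[of "e - t *\<^sub>R v"] l1 by simp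
    moreover have "0 < (\<Sum>j\<in>UNIV. \<bar>v $ j\<bar>)"
      using \<open>v \<noteq> 0\<close> norm_le_l1_cart[of v] by (metis less_le_trans zero_less_norm_iff)
    ultimately show False using \<open>0 < t\<close> by (simp add: mult_le_0_iff)
  qed
  with \<open>e \<in> \<Lambda>\<close> show ?thesis by (intro that[of e]) (simp_all add: \<Lambda>_def)
qed

lemma sign_cone_norm_bound:
  fixes f :: "real^'m \<Rightarrow> 'b::real_normed_vector"
  assumes "linear f" and kernel: "\<And>v. v \<in> sign_cone \<sigma> \<Longrightarrow> f v = 0 \<Longrightarrow> v = 0"
  obtains C where "0 \<le> C" "\<And>v. v \<in> sign_cone \<sigma> \<Longrightarrow> norm v \<le> C * norm (f v)"
proof -
  define K where "K = sign_cone \<sigma> \<inter> sphere 0 1"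
  have "compact K" unfolding K_def by (intro closed_Int_compact closed_sign_cone compact_sphere)
  have "continuous_on K f"
    using assms(1) by (simp add: linear_continuous_on linear_conv_bounded_linear)
  obtain c where "0 < c" and c: "\<And>w. w \<in> K \<Longrightarrow> c \<le> norm (f w)"
  proof (cases "K = {}")
    case False
    have "continuous_on K (\<lambda>w. norm (f w))"
      using \<open>continuous_on K f\<close> by (rule continuous_on_norm)
    then obtain w0 where "w0 \<in> K" and w0: "\<And>w. w \<in> K \<Longrightarrow> norm (f w0) \<le> norm (f w)"
      using continuous_attains_inf[OF \<open>compact K\<close> False] by blast
    moreover have "f w0 \<noteq> 0" using kernel \<open>w0 \<in> K\<close> by (force simp: K_def)
    ultimately show ?thesis by (intro that[of "norm (f w0)"]) auto
  qed (use that[of 1] in auto)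
  show ?thesis
  proof (rule that[of "1 / c"])
    show "0 \<le> 1 / c" using \<open>0 < c\<close> by simp
    fix v assume "v \<in> sign_cone \<sigma>"
    show "norm v \<le> 1 / c * norm (f v)"
    proof (cases "v = 0")
      case False
      have "(1 / norm v) *\<^sub>R v \<in> K"
        unfolding K_def using \<open>v \<in> sign_cone \<sigma>\<close> False by (simp add: sign_cone_scaleR)
      then have "c \<le> norm (f ((1 / norm v) *\<^sub>R v))" by (rule c)
      also have "\<dots> = norm (f v) / norm v" by (simp add: linear_scale[OF assms(1)])
      finally show ?thesis using \<open>0 < c\<close> False by (simp add: field_simps)
    qed (use \<open>0 < c\<close> in simp)
  qed
qed

text \<open>There are only finitely many sign cones, so the constants of
  sign_cone_norm_bound can be added up.\<close>

lemma conformal_preimage_bound: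
  fixes f :: "real^'m \<Rightarrow> 'b::real_normed_vector"
  assumes "linear f"
  obtains C where "\<And>d. \<exists>e. f e = f d \<and> conformal e d \<and> norm e \<le> C * norm (f d)"
proof -
  let ?kernel_free = "\<lambda>\<sigma>. \<forall>v \<in> sign_cone \<sigma>. f v = 0 \<longrightarrow> v = 0"
  have "\<exists>C\<ge>0. ?kernel_free \<sigma> \<longrightarrow> (\<forall>v\<in>sign_cone \<sigma>. norm v \<le> C * norm (f v))" for \<sigma>
    by (metis sign_cone_norm_bound[OF assms] order_refl)
  then obtain C\<sigma> where C\<sigma>_nonneg: "\<And>\<sigma>. 0 \<le> C\<sigma> \<sigma>"
    and C\<sigma>: "\<And>\<sigma> v. ?kernel_free \<sigma> \<Longrightarrow> v \<in> sign_cone \<sigma> \<Longrightarrow> norm v \<le> C\<sigma> \<sigma> * norm (f v)"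
    by metis
  define S where "S = {\<sigma> :: real^'m. \<forall>j. \<sigma> $ j \<in> {-1, 0, 1}}"
  show ?thesis
  proof (rule that)
    fix d
    obtain e where "f e = f d" "conformal e d" and kernel: "?kernel_free e"
      using exists_conformal_kernel_free[OF assms] by metis
    define \<sigma> where "\<sigma> = (\<chi> j. sgn (e $ j))"
    have "\<sigma> \<in> S" unfolding S_def \<sigma>_def by (simp add: sgn_real_def)
    have "sign_cone \<sigma> = sign_cone e" unfolding \<sigma>_def by (rule sign_cone_sgn)
    moreover have "e \<in> sign_cone e" by (simp add: sign_cone_def)
    ultimately have "norm e \<le> C\<sigma> \<sigma> * norm (f e)" using C\<sigma> kernel by simp
    also have "\<dots> \<le> (\<Sum>\<sigma>\<in>S. C\<sigma> \<sigma>) * norm (f e)"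
      using \<open>\<sigma> \<in> S\<close> finite_vec_range[of "{-1, 0, 1 :: real}"]
      by (intro mult_right_mono member_le_sum C\<sigma>_nonneg) (auto simp: S_def)
    finally show "\<exists>e. f e = f d \<and> conformal e d \<and> norm e \<le> (\<Sum>\<sigma>\<in>S. C\<sigma> \<sigma>) * norm (f d)"
      using \<open>f e = f d\<close> \<open>conformal e d\<close> by auto
  qed
qed

lemma conformal_diff_nonneg:
  assumes "\<forall>j. 0 \<le> x $ j" "\<forall>j. 0 \<le> y $ j" "conformal e (x - y)"
  shows "0 \<le> (x - e) $ j"
proof -
  have "0 \<le> e $ j * (x $ j - y $ j)" "\<bar>e $ j\<bar> \<le> \<bar>x $ j - y $ j\<bar>"
    using assms(3) by (auto simp: conformal_def)
  then show ?thesis using assms(1,2)[rule_format, of j]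
    by (cases "0 \<le> x $ j - y $ j") (auto simp: zero_le_mult_iff)
qed

lemma closed_nonneg_fibre:
  fixes g :: "real^'m \<Rightarrow> 'b::real_normed_vector"
  assumes "linear g"
  shows "closed {q. (\<forall>j. 0 \<le> q $ j) \<and> g q = s}"
proof -
  have "closed {q. g q = s}"
    using assms by (intro closed_Collect_eq continuous_on_const linear_continuous_on)
      (auto simp: linear_conv_bounded_linear)
  then show ?thesis
    unfolding Collect_conj_eq
    by (intro closed_Int closed_Collect_all closed_Collect_le continuous_intros)
qed

lemma linear_sum_coordinates: "linear (\<lambda>q :: real^'m. \<Sum>j\<in>UNIV. q $ j)"
  by (auto simp: linear_iff sum.distrib sum_distrib_left)

lemma hoffman_constant_exists:
  fixes a :: "real^'m^'n" and g :: "real^'m \<Rightarrow> 'b::real_normed_vector" and s :: 'b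
  assumes "linear g"
  defines "P \<equiv> {q. (\<forall>j. 0 \<le> q $ j) \<and> g q = s}"
  shows "\<exists>H>0. \<forall>z. P \<inter> {x. a *v x = z} \<noteq> {} \<longrightarrow>
    (\<forall>x\<in>P. norm (x - closest_point (P \<inter> {x. a *v x = z}) x) \<le> H * norm (a *v x - z))"
proof -
  define f where "f q = (a *v q, g q)" for q
  have "bounded_linear g" using assms(1) by (simp add: linear_conv_bounded_linear)
  then have "linear f"
    unfolding f_def
    by (intro bounded_linear.linear bounded_linear_Pair) (simp_all add: linear_linear)
  then obtain C where C: "\<And>d. \<exists>e. f e = f d \<and> conformal e d \<and> norm e \<le> C * norm (f d)"
    using conformal_preimage_bound by metis
  have "closed P" unfolding P_def using assms(1) by (rule closed_nonneg_fibre)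
  have "norm (x - closest_point (P \<inter> {x. a *v x = z}) x) \<le> (\<bar>C\<bar> + 1) * norm (a *v x - z)"
    if "x \<in> P" "y0 \<in> P" "a *v y0 = z" for x y0 z
  proof -
    \<comment> \<open>x - e stays nonnegative since e has the signs of x - y0 and is dominated by it.\<close>
    obtain e where fe: "f e = f (x - y0)" and "conformal e (x - y0)"
      and e: "norm e \<le> C * norm (f (x - y0))" using C by blast
    have "g (x - y0) = 0" using that assms(1) by (simp add: P_def linear_diff)
    then have f_diff: "f (x - y0) = (a *v x - z, 0)"
      using that by (simp add: f_def matrix_vector_mult_diff_distrib)
    have "x - e \<in> P \<inter> {x. a *v x = z}"
    proof -
      have "a *v e = a *v x - z" "g e = 0" using fe f_diff by (simp_all add: f_def)
      then have "a *v (x - e) = z" "g (x - e) = s"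
        using that assms(1) by (simp_all add: P_def matrix_vector_mult_diff_distrib linear_diff)
      moreover have "0 \<le> (x - e) $ j" for j
        using that \<open>conformal e (x - y0)\<close> by (intro conformal_diff_nonneg) (auto simp: P_def)
      ultimately show ?thesis by (simp add: P_def)
    qed
    moreover have "closed (P \<inter> {x. a *v x = z})"
      using \<open>closed P\<close> by (intro closed_Int closed_matrix_fibre)
    ultimately have "dist x (closest_point (P \<inter> {x. a *v x = z}) x) \<le> dist x (x - e)"
      by (intro closest_point_le)
    also have "\<dots> \<le> C * norm (a *v x - z)" using e f_diff by (simp add: dist_norm norm_Pair)
    also have "\<dots> \<le> (\<bar>C\<bar> + 1) * norm (a *v x - z)" by (intro mult_right_mono) auto
    finally show ?thesis by (simp add: dist_norm)
  qed
  then show ?thesis by (intro exI[of _ "\<bar>C\<bar> + 1"]) auto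
qed

lemma norm_le_hoffman:
  fixes A :: "real^'m^'n"
  assumes "\<exists>H>0. \<forall>z. X \<inter> {x. A *v x = z} \<noteq> {} \<longrightarrow>
      (\<forall>x\<in>X. norm (x - closest_point (X \<inter> {x. A *v x = z}) x) \<le> H * norm (A *v x - z))"
    and "x \<in> X" "X \<inter> {x. A *v x = z} \<noteq> {}"
  shows "norm (x - closest_point (X \<inter> {x. A *v x = z}) x) \<le> hoffman X A * norm (A *v x - z)"
proof -
  define S where "S = {H. H > 0 \<and> (\<forall>z. X \<inter> {x. A *v x = z} \<noteq> {} \<longrightarrow>
      (\<forall>x\<in>X. norm (x - closest_point (X \<inter> {x. A *v x = z}) x) \<le> H * norm (A *v x - z)))}"
  let ?n = "norm (x - closest_point (X \<inter> {x. A *v x = z}) x)"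
  let ?r = "norm (A *v x - z)"
  obtain H where "H \<in> S" using assms(1) unfolding S_def by blast
  then have bound: "?n \<le> H' * ?r" if "H' \<in> S" for H'
    using that assms(2,3) unfolding S_def by blast
  show ?thesis
  proof (cases "?r = 0")
    case True
    then show ?thesis using bound[OF \<open>H \<in> S\<close>] by simp
  next
    case False
    then have "?n / ?r \<le> Inf S"
      using \<open>H \<in> S\<close> bound by (intro cInf_greatest) (auto simp: divide_le_eq)
    then show ?thesis using False by (simp add: hoffman_def S_def[symmetric] divide_le_eq)
  qed
qed

lemma compact_simplex: "compact {q :: real^'m. (\<forall>j. 0 \<le> q $ j) \<and> (\<Sum>j\<in>UNIV. q $ j) = s}"
proof -
  have "norm q \<le> s" if "\<forall>j. 0 \<le> q $ j" "(\<Sum>j\<in>UNIV. q $ j) = s" for q :: "real^'m"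
    using norm_le_l1_cart[of q] that by simp
  then have "bounded {q :: real^'m. (\<forall>j. 0 \<le> q $ j) \<and> (\<Sum>j\<in>UNIV. q $ j) = s}"
    unfolding bounded_iff by blast
  then show ?thesis
    using closed_nonneg_fibre[OF linear_sum_coordinates] by (simp add: compact_eq_bounded_closed)
qed

lemma convex_simplex: "convex {q :: real^'m. (\<forall>j. 0 \<le> q $ j) \<and> (\<Sum>j\<in>UNIV. q $ j) = s}"
  unfolding convex_def
  by (auto simp: sum.distrib simp flip: sum_distrib_left distrib_right)

lemma norm_le_hoffman_simplex:
  fixes a :: "real^'m^'n"
  assumes P: "P = {q :: real^'m. (\<forall>j. 0 \<le> q $ j) \<and> (\<Sum>j\<in>UNIV. q $ j) = s}"
    and "x \<in> P" "y \<in> P"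
  shows "norm (x - closest_point (P \<inter> {z. a *v z = a *v y}) x)
    \<le> hoffman P a * norm (a *v x - a *v y)"
  using hoffman_constant_exists[OF linear_sum_coordinates, of s a] assms(2,3)
  unfolding P[symmetric] by (intro norm_le_hoffman) auto

lemma compact_INF_attained:
  fixes f :: "'a::topological_space \<Rightarrow> real"
  assumes "compact S" "S \<noteq> {}" "continuous_on S f"
  obtains x where "x \<in> S" "(INF y\<in>S. f y) = f x"
proof -
  obtain x where "x \<in> S" "\<And>y. y \<in> S \<Longrightarrow> f x \<le> f y"
    using continuous_attains_inf[OF assms] by blast
  then show ?thesis by (intro that[of x]) (auto intro: cInf_eq_minimum)
qed

theorem theorem8:
  fixes a :: "real^'m^'n" and B :: "real^'n" and p :: "nat \<Rightarrow> real^'m"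
    and P :: "(real^'m) set" and rbar rlow :: "real^'n"
    and F :: "real^'m \<Rightarrow> real" and mu L Fstar :: real
  assumes nonneg: "\<forall>i j. a $ i $ j \<ge> 0"
    and no_zero_row: "\<forall>i. \<exists>j. a $ i $ j \<noteq> 0"
    and no_zero_col: "\<forall>j. \<exists>i. a $ i $ j \<noteq> 0"
    and Bpos: "\<forall>i. B $ i > 0"
    and P_def: "P = {q. (\<forall>j. q $ j \<ge> 0) \<and> (\<Sum>j\<in>UNIV. q $ j) = (\<Sum>i\<in>UNIV. \<bar>B $ i\<bar>)}"
    and rbar_def: "rbar = (\<chi> i. (\<Sum>k\<in>UNIV. \<bar>B $ k\<bar>) * (MAX j. \<bar>a $ i $ j\<bar>))"
    and rlow_def: "rlow = (\<chi> i. B $ i * (MAX j. \<bar>a $ i $ j\<bar>))"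
    and F_def: "F = (\<lambda>q. \<Sum>i\<in>UNIV. htilde_i (B $ i) (rlow $ i) ((a *v q) $ i))"
    and mu_def: "mu = (MIN i. B $ i / (rbar $ i)\<^sup>2)"
    and L_def: "L = (MAX i. B $ i / (rlow $ i)\<^sup>2)"
    and Fstar_def: "Fstar = (INF q\<in>P. F q)"
    and p0: "p 0 \<in> P"
    and step: "\<forall>t. p (Suc t) = closest_point P (p t - (1 / (L * (spec_norm a)\<^sup>2)) *\<^sub>R grad F (p t))"
  shows "\<forall>t. F (p t) - Fstar \<le>
     (1 - mu / max mu (L * (hoffman P a)\<^sup>2 * (spec_norm a)\<^sup>2)) ^ t * (F (p 0) - Fstar)"
proof -
  define Lf where "Lf = L * (spec_norm a)\<^sup>2"
  note thresholds = htilde_thresholds[OF no_zero_row Bpos, folded rlow_def rbar_def]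
  have rlow_pos: "\<forall>i. 0 < rlow $ i" and rlow_le: "\<forall>i. rlow $ i \<le> rbar $ i"
    using thresholds(1,2) by blast+
  have image_le: "\<forall>i. (a *v q) $ i \<le> rbar $ i" if "q \<in> P" for q
    using thresholds(4) that by (simp add: P_def)
  have "0 < mu" using thresholds(3) by (simp add: mu_def)
  obtain i j where "a $ i $ j \<noteq> 0" using no_zero_row by blast
  then have "0 < spec_norm a" by (rule spec_norm_pos)
  moreover have "0 < B $ i / (rlow $ i)\<^sup>2"
    using Bpos rlow_pos[rule_format, of i] by (intro divide_pos_pos) auto
  moreover have "B $ i / (rlow $ i)\<^sup>2 \<le> L" by (simp add: L_def)
  ultimately have "0 < Lf" unfolding Lf_def by (metis less_le_trans mult_pos_pos zero_less_power)
  have F_eq: "F = separable_comp (\<lambda>i. htilde_i (B $ i) (rlow $ i)) a"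
    by (simp add: F_def separable_comp_def[abs_def])
  have "compact P" unfolding P_def by (rule compact_simplex)
  moreover have "continuous_on P F" unfolding F_eq using rlow_pos
    by (intro continuous_at_imp_continuous_on ballI
        has_derivative_continuous[OF has_derivative_htilde_objective])
  ultimately obtain xs where "xs \<in> P" "Fstar = F xs"
    unfolding Fstar_def using p0 by (metis compact_INF_attained empty_iff)
  have "F (p t) - F xs \<le> (1 - mu / max mu (Lf * (hoffman P a)\<^sup>2)) ^ t * (F (p 0) - F xs)" for t
  proof (rule projected_gradient_linear_convergence)
    show "F y \<le> F x + grad F x \<bullet> (y - x) + Lf / 2 * (norm (y - x))\<^sup>2" for x y
      unfolding F_eq Lf_def using Bpos rlow_pos
      by (intro htilde_objective_upper_bound) (auto simp: L_def less_imp_le)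
    show "F x + grad F x \<bullet> (y - x) + mu / 2 * (norm (a *v (y - x)))\<^sup>2 \<le> F y"
      if "x \<in> P" "y \<in> P" for x y
      unfolding F_eq using Bpos rlow_pos rlow_le image_le that
      by (intro htilde_objective_lower_bound[where R = rbar]) (auto simp: mu_def less_imp_le)
    show "norm (x - closest_point (P \<inter> {y. a *v y = a *v xs}) x)
      \<le> hoffman P a * norm (a *v x - a *v xs)"
      if "x \<in> P" for x
      using P_def that \<open>xs \<in> P\<close> by (rule norm_le_hoffman_simplex)
  qed (use \<open>compact P\<close> P_def convex_simplex \<open>xs \<in> P\<close> \<open>0 < Lf\<close> \<open>0 < mu\<close> p0 step
      in \<open>auto simp: F_def Lf_def compact_imp_closed\<close>)
  moreover have "L * (hoffman P a)\<^sup>2 * (spec_norm a)\<^sup>2 = Lf * (hoffman P a)\<^sup>2"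
    by (simp add: Lf_def mult_ac)
  ultimately show ?thesis unfolding \<open>Fstar = F xs\<close> by (simp only:) blast
qed

end
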